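(* Let $f,g\colon X\to Y$ be morphisms in $\mathbf{CompOrd}$ having a common retraction $k\colon Y\to X$ (i.e. $k\circ f=k\circ g=1_X$), let $h\colon E\to X$ be an equalizer of $f$ and $g$ in $\mathbf{CompOrd}$, and let $K$ be a closed subset of $X$. Then: (1) if $\uparrow f[K]=\uparrow g[K]$, then $\uparrow K=\uparrow(K\cap\operatorname{im}h)$; (2) if $\downarrow f[K]=\downarrow g[K]$, then $\downarrow K=\downarrow(K\cap\operatorname{im}h)$; (3) if $\updownarrow f[K]=\updownarrow g[K]$, then $\updownarrow K=\updownarrow(K\cap\operatorname{im}h)$.
   Context: $\mathbf{CompOrd}$ is the category of compact ordered spaces (compact Hausdorff spaces with a partial order closed in $X\times X$) and continuous order-preserving maps. For a subset $Y$ of a poset, $\uparrow Y$, $\downarrow Y$ denote up- and down-closure and $\updownarrow Y=\uparrow Y\cap\downarrow Y$. *)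

theory Defs
  imports "HOL-Analysis.Analysis"
begin

definition comp_ord :: "'a topology \<Rightarrow> ('a \<Rightarrow> 'a \<Rightarrow> bool) \<Rightarrow> bool" where
  "comp_ord T le \<longleftrightarrow>
     compact_space T \<and> Hausdorff_space T \<and>
     (\<forall>x\<in>topspace T. le x x) \<and>
     (\<forall>x\<in>topspace T. \<forall>y\<in>topspace T. le x y \<and> le y x \<longrightarrow> x = y) \<and>
     (\<forall>x\<in>topspace T. \<forall>y\<in>topspace T. \<forall>z\<in>topspace T. le x y \<and> le y z \<longrightarrow> le x z) \<and>
     closedin (prod_topology T T) {(x, y). x \<in> topspace T \<and> y \<in> topspace T \<and> le x y}"

definition comp_ord_hom ::
  "'a topology \<Rightarrow> ('a \<Rightarrow> 'a \<Rightarrow> bool) \<Rightarrow> 'b topology \<Rightarrow> ('b \<Rightarrow> 'b \<Rightarrow> bool) \<Rightarrow> ('a \<Rightarrow> 'b) \<Rightarrow> bool" where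
  "comp_ord_hom T le T' le' f \<longleftrightarrow>
     continuous_map T T' f \<and>
     (\<forall>x\<in>topspace T. \<forall>y\<in>topspace T. le x y \<longrightarrow> le' (f x) (f y))"

definition up_cl :: "'a set \<Rightarrow> ('a \<Rightarrow> 'a \<Rightarrow> bool) \<Rightarrow> 'a set \<Rightarrow> 'a set" where
  "up_cl S le A = {y\<in>S. \<exists>x\<in>A. le x y}"

definition down_cl :: "'a set \<Rightarrow> ('a \<Rightarrow> 'a \<Rightarrow> bool) \<Rightarrow> 'a set \<Rightarrow> 'a set" where
  "down_cl S le A = {y\<in>S. \<exists>x\<in>A. le y x}"

definition updown_cl :: "'a set \<Rightarrow> ('a \<Rightarrow> 'a \<Rightarrow> bool) \<Rightarrow> 'a set \<Rightarrow> 'a set" where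
  "updown_cl S le A = up_cl S le A \<inter> down_cl S le A"

text \<open>Test objects range over compact ordered spaces whose points are of the type 'x of X. Uniqueness of the mediating map is up to equality on the carrier.\<close>
definition comp_ord_equalizer ::
  "'e topology \<Rightarrow> ('e \<Rightarrow> 'e \<Rightarrow> bool) \<Rightarrow> 'x topology \<Rightarrow> ('x \<Rightarrow> 'x \<Rightarrow> bool) \<Rightarrow>
   'y topology \<Rightarrow> ('y \<Rightarrow> 'y \<Rightarrow> bool) \<Rightarrow> ('x \<Rightarrow> 'y) \<Rightarrow> ('x \<Rightarrow> 'y) \<Rightarrow> ('e \<Rightarrow> 'x) \<Rightarrow> bool" where
  "comp_ord_equalizer TE leE TX leX TY leY f g h \<longleftrightarrow>
     comp_ord TE leE \<and>
     comp_ord_hom TE leE TX leX h \<and>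
     (\<forall>e\<in>topspace TE. f (h e) = g (h e)) \<and>
     (\<forall>(TZ :: 'x topology) leZ m.
        comp_ord TZ leZ \<and> comp_ord_hom TZ leZ TX leX m \<and>
        (\<forall>z\<in>topspace TZ. f (m z) = g (m z)) \<longrightarrow>
        (\<exists>u. comp_ord_hom TZ leZ TE leE u \<and> (\<forall>z\<in>topspace TZ. h (u z) = m z) \<and>
             (\<forall>u'. comp_ord_hom TZ leZ TE leE u' \<and> (\<forall>z\<in>topspace TZ. h (u' z) = m z) \<longrightarrow>
                   (\<forall>z\<in>topspace TZ. u' z = u z))))"

end

theory Submission
  imports Defs
begin

text \<open>Take x \<in> K and, by Zorn's lemma and compactness, an element m of K that is minimal in
K and lies below x. Since f m \<in> \<up>g[K], some y \<in> K has g y \<le> f m; applying the monotone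
retraction k gives y \<le> m, so y = m and g m \<le> f m. Symmetrically f m \<le> g m, hence m is
equalized by f and g and therefore lies in the image of the equalizer h (test it against the
one-point space {m}). Thus every point of \<up>K lies above a point of K \<inter> im h. The statement
for down-sets is the order dual, and the one for \<updown> combines the two.\<close>

lemma
  assumes "comp_ord T le"
  shows comp_ord_refl: "x \<in> topspace T \<Longrightarrow> le x x"
    and comp_ord_antisym: "\<lbrakk>x \<in> topspace T; y \<in> topspace T; le x y; le y x\<rbrakk> \<Longrightarrow> x = y"
    and comp_ord_trans:
      "\<lbrakk>x \<in> topspace T; y \<in> topspace T; z \<in> topspace T; le x y; le y z\<rbrakk> \<Longrightarrow> le x z"
    and comp_ord_compact_space: "compact_space T"
    and comp_ord_closedin_graph:
      "closedin (prod_topology T T) {(x, y). x \<in> topspace T \<and> y \<in> topspace T \<and> le x y}"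
  using assms unfolding comp_ord_def by blast+

lemma comp_ord_dual:
  assumes "comp_ord T le"
  shows "comp_ord T (\<lambda>x y. le y x)"
proof -
  let ?G = "{(x, y). x \<in> topspace T \<and> y \<in> topspace T \<and> le x y}"
  have "closedin (prod_topology T T) ((\<lambda>(x, y). (y, x)) ` ?G)"
    using homeomorphic_imp_closed_map[OF homeomorphic_map_swap] comp_ord_closedin_graph[OF assms]
    unfolding closed_map_def by blast
  moreover have "(\<lambda>(x, y). (y, x)) ` ?G = {(x, y). x \<in> topspace T \<and> y \<in> topspace T \<and> le y x}"
    by auto
  ultimately show ?thesis
    using assms unfolding comp_ord_def by (simp only:) blast
qed

lemma comp_ord_subtopology:
  assumes X: "comp_ord T le" and S: "closedin T S"
  shows "comp_ord (subtopology T S) le"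
proof -
  let ?G = "{(x, y). x \<in> topspace T \<and> y \<in> topspace T \<and> le x y}"
  have "closedin (subtopology (prod_topology T T) (S \<times> S)) ((S \<times> S) \<inter> ?G)"
    using comp_ord_closedin_graph[OF X] by (rule closedin_subtopology_Int_closed)
  moreover have "(S \<times> S) \<inter> ?G
      = {(x, y). x \<in> topspace (subtopology T S) \<and> y \<in> topspace (subtopology T S) \<and> le x y}"
    by auto
  ultimately have "closedin (prod_topology (subtopology T S) (subtopology T S))
      {(x, y). x \<in> topspace (subtopology T S) \<and> y \<in> topspace (subtopology T S) \<and> le x y}"
    by (simp add: subtopology_Times)
  moreover have "compact_space (subtopology T S)"
    using S comp_ord_compact_space[OF X] by (intro compact_space_subtopology closedin_compact_space)
  moreover have "Hausdorff_space (subtopology T S)"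
    using X by (intro Hausdorff_space_subtopology) (simp add: comp_ord_def)
  ultimately show ?thesis
    unfolding comp_ord_def[of "subtopology T S"]
    by (auto intro: comp_ord_refl[OF X] comp_ord_antisym[OF X] comp_ord_trans[OF X])
qed

lemma closedin_down_set:
  assumes "comp_ord T le" and "a \<in> topspace T"
  shows "closedin T {x \<in> topspace T. le x a}"
proof -
  have "continuous_map T (prod_topology T T) (\<lambda>x. (x, a))"
    using assms(2) by (intro continuous_map_pairedI) auto
  then have "closedin T {x \<in> topspace T. (x, a) \<in> {(x, y). x \<in> topspace T \<and> y \<in> topspace T \<and> le x y}}"
    using comp_ord_closedin_graph[OF assms(1)] by (rule closedin_continuous_map_preimage)
  then show ?thesis
    using assms(2) by (simp cong: conj_cong)
qed

lemma comp_ord_closedin_ex_minimal: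
  assumes X: "comp_ord T le" and C: "closedin T C" "C \<noteq> {}"
  shows "\<exists>m\<in>C. \<forall>x\<in>C. le x m \<longrightarrow> x = m"
proof -
  have CT: "C \<subseteq> topspace T"
    using C closedin_subset by auto
  note refl = comp_ord_refl[OF X] and trans = comp_ord_trans[OF X]
  have po: "partial_order_on C (relation_of (\<lambda>x y. le y x) C)"
    using CT by (intro partial_order_on_relation_ofI) (auto intro: refl trans comp_ord_antisym[OF X])
  have "\<exists>u\<in>C. \<forall>l\<in>L. le u l" if L: "L \<in> Chains (relation_of (\<lambda>x y. le y x) C)" for L
  proof (cases "L = {}")
    case True
    then show ?thesis using C by blast
  next
    case False
    have LT: "L \<subseteq> topspace T"
      using Chains_relation_of[OF L] CT by blast
    define D where "D l = C \<inter> {x \<in> topspace T. le x l}" for l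
    have D_chain: "D l \<subseteq> D l' \<or> D l' \<subseteq> D l" if "l \<in> L" "l' \<in> L" for l l'
    proof -
      have "le l l' \<or> le l' l"
        using L that unfolding Chains_def relation_of_def by blast
      then show ?thesis
        using that LT trans unfolding D_def by blast
    qed
    then have "subset.chain UNIV (D ` L)"
      by (simp add: subset_chain_def)
    then have chain_F: "subset.chain UNIV F" if "F \<subseteq> D ` L" for F
      using that unfolding subset_chain_def by (meson subsetD subset_UNIV)
    have l_in_D: "l \<in> D l" if "l \<in> L" for l
      using that Chains_relation_of[OF L] LT refl by (auto simp: D_def)
    have "\<Inter>F \<noteq> {}" if F: "finite F" "F \<subseteq> D ` L" for F
    proof (cases "F = {}")
      case False
      then have "\<Inter>F \<in> F"
        using F chain_F by (intro Inter_in_chain)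
      with F(2) obtain l where "l \<in> L" "\<Inter>F = D l"
        by auto
      then show ?thesis
        using l_in_D by auto
    qed simp
    moreover have "closedin T (D l)" if "l \<in> L" for l
      using that LT C closedin_down_set[OF X] by (auto simp: D_def)
    ultimately have "\<Inter>(D ` L) \<noteq> {}"
      by (intro comp_ord_compact_space[OF X, unfolded compact_space_fip, rule_format]) auto
    then obtain u where "u \<in> \<Inter>(D ` L)" by blast
    then show ?thesis
      using False by (auto simp: D_def)
  qed
  then show ?thesis
    using predicate_Zorn[OF po] by auto
qed

lemma comp_ord_hom_dual:
  "comp_ord_hom T le T' le' f \<Longrightarrow> comp_ord_hom T (\<lambda>x y. le y x) T' (\<lambda>x y. le' y x) f"
  by (simp add: comp_ord_hom_def)

lemma comp_ord_hom_in_topspace: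
  "comp_ord_hom T le T' le' f \<Longrightarrow> x \<in> topspace T \<Longrightarrow> f x \<in> topspace T'"
  unfolding comp_ord_hom_def continuous_map_def by blast

lemma comp_ord_hom_mono:
  "\<lbrakk>comp_ord_hom T le T' le' f; x \<in> topspace T; y \<in> topspace T; le x y\<rbrakk> \<Longrightarrow> le' (f x) (f y)"
  unfolding comp_ord_hom_def by blast

lemma comp_ord_equalizer_image:
  assumes h: "comp_ord_equalizer TE leE TX leX TY leY f g h"
    and X: "comp_ord TX leX" and S: "closedin TX S" and fg: "\<forall>x\<in>S. f x = g x"
  shows "S \<subseteq> h ` topspace TE"
proof -
  have ST: "topspace (subtopology TX S) = S"
    using S closedin_subset by auto
  have "comp_ord_hom (subtopology TX S) leX TX leX id"
    unfolding comp_ord_hom_def by (simp add: continuous_map_from_subtopology)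
  then obtain u where u: "comp_ord_hom (subtopology TX S) leX TE leE u" "\<forall>z\<in>S. h (u z) = z"
    using h[unfolded comp_ord_equalizer_def, THEN conjunct2, THEN conjunct2, THEN conjunct2,
        rule_format, of "subtopology TX S" leX id] comp_ord_subtopology[OF X S] fg ST
    by auto
  show ?thesis
  proof
    fix x
    assume "x \<in> S"
    then have "u x \<in> topspace TE" "h (u x) = x"
      using u ST comp_ord_hom_in_topspace by fastforce+
    then show "x \<in> h ` topspace TE"
      by (metis image_eqI)
  qed
qed

lemma up_cl_dual: "up_cl S (\<lambda>x y. le y x) A = down_cl S le A"
  by (simp add: up_cl_def down_cl_def)

lemma up_cl_mono: "A \<subseteq> B \<Longrightarrow> up_cl S le A \<subseteq> up_cl S le B"
  unfolding up_cl_def by blast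

lemma subset_up_cl:
  assumes "comp_ord T le" and "A \<subseteq> topspace T"
  shows "A \<subseteq> up_cl (topspace T) le A"
  using assms(2) comp_ord_refl[OF assms(1)] unfolding up_cl_def by blast

lemma subset_down_cl:
  assumes "comp_ord T le" and "A \<subseteq> topspace T"
  shows "A \<subseteq> down_cl (topspace T) le A"
  using assms(2) comp_ord_refl[OF assms(1)] unfolding down_cl_def by blast

locale common_retraction =
  fixes TX :: "'x topology" and leX :: "'x \<Rightarrow> 'x \<Rightarrow> bool"
    and TY :: "'y topology" and leY :: "'y \<Rightarrow> 'y \<Rightarrow> bool"
    and f g :: "'x \<Rightarrow> 'y" and k :: "'y \<Rightarrow> 'x"
  assumes X: "comp_ord TX leX" and Y: "comp_ord TY leY"
    and f: "comp_ord_hom TX leX TY leY f" and g: "comp_ord_hom TX leX TY leY g"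
    and k: "comp_ord_hom TY leY TX leX k"
    and kf: "\<forall>x\<in>topspace TX. k (f x) = x" and kg: "\<forall>x\<in>topspace TX. k (g x) = x"
begin

lemma le_at_minimal:
  assumes fg: "f ` K \<subseteq> up_cl (topspace TY) leY (g ` K)" and KT: "K \<subseteq> topspace TX"
    and m: "m \<in> K" and min: "\<forall>y\<in>K. leX y m \<longrightarrow> y = m"
  shows "leY (g m) (f m)"
proof -
  obtain y where y: "y \<in> K" "leY (g y) (f m)"
    using fg m unfolding up_cl_def by blast
  have yT: "y \<in> topspace TX" and mT: "m \<in> topspace TX"
    using y(1) m KT by auto
  have "leX (k (g y)) (k (f m))"
    using y(2) yT mT by (intro comp_ord_hom_mono[OF k] comp_ord_hom_in_topspace[OF f]
        comp_ord_hom_in_topspace[OF g])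
  then have "leX y m"
    using kf kg yT mT by simp
  then show ?thesis
    using min y by auto
qed

lemma eq_at_minimal:
  assumes "f ` K \<subseteq> up_cl (topspace TY) leY (g ` K)" "g ` K \<subseteq> up_cl (topspace TY) leY (f ` K)"
    and "K \<subseteq> topspace TX" "m \<in> K" "\<forall>y\<in>K. leX y m \<longrightarrow> y = m"
  shows "f m = g m"
proof -
  interpret swapped: common_retraction TX leX TY leY g f k
    using X Y f g k kf kg by unfold_locales
  have "leY (g m) (f m)" "leY (f m) (g m)"
    using assms le_at_minimal swapped.le_at_minimal by blast+
  then show ?thesis
    using assms(3,4) comp_ord_antisym[OF Y]
      comp_ord_hom_in_topspace[OF f] comp_ord_hom_in_topspace[OF g]
    by blast
qed

lemma ex_minimal_below:
  assumes K: "closedin TX K" and x: "x \<in> K"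
  shows "\<exists>m\<in>K. leX m x \<and> (\<forall>y\<in>K. leX y m \<longrightarrow> y = m)"
proof -
  have KT: "K \<subseteq> topspace TX"
    using K closedin_subset by auto
  have "closedin TX (K \<inter> {y \<in> topspace TX. leX y x})"
    using K closedin_down_set[OF X] x KT by auto
  moreover have "x \<in> K \<inter> {y \<in> topspace TX. leX y x}"
    using x KT comp_ord_refl[OF X] by auto
  ultimately obtain m where m: "m \<in> K" "m \<in> topspace TX" "leX m x"
    and min: "\<forall>y\<in>K \<inter> {y \<in> topspace TX. leX y x}. leX y m \<longrightarrow> y = m"
    using comp_ord_closedin_ex_minimal[OF X] by blast
  have "y = m" if "y \<in> K" "leX y m" for y
    using that m x KT min comp_ord_trans[OF X, of y m x] by blast
  with m show ?thesis
    by blast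
qed

lemma up_cl_eq_up_cl_Int:
  assumes K: "closedin TX K"
    and "f ` K \<subseteq> up_cl (topspace TY) leY (g ` K)" "g ` K \<subseteq> up_cl (topspace TY) leY (f ` K)"
    and I: "{x \<in> K. f x = g x} \<subseteq> I"
  shows "up_cl (topspace TX) leX K = up_cl (topspace TX) leX (K \<inter> I)"
proof
  show "up_cl (topspace TX) leX (K \<inter> I) \<subseteq> up_cl (topspace TX) leX K"
    by (simp add: up_cl_mono)
  have KT: "K \<subseteq> topspace TX"
    using K closedin_subset by auto
  show "up_cl (topspace TX) leX K \<subseteq> up_cl (topspace TX) leX (K \<inter> I)"
  proof
    fix z
    assume "z \<in> up_cl (topspace TX) leX K"
    then obtain x where x: "x \<in> K" "leX x z" "z \<in> topspace TX"
      unfolding up_cl_def by auto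
    then obtain m where m: "m \<in> K" "leX m x" "\<forall>y\<in>K. leX y m \<longrightarrow> y = m"
      using ex_minimal_below[OF K] by blast
    then have "f m = g m"
      using assms(2,3) KT by (intro eq_at_minimal)
    moreover have "leX m z"
      using m x KT comp_ord_trans[OF X] by blast
    ultimately show "z \<in> up_cl (topspace TX) leX (K \<inter> I)"
      unfolding up_cl_def using x m I by auto
  qed
qed

lemma down_cl_eq_down_cl_Int:
  assumes "closedin TX K"
    and "f ` K \<subseteq> down_cl (topspace TY) leY (g ` K)" "g ` K \<subseteq> down_cl (topspace TY) leY (f ` K)"
    and "{x \<in> K. f x = g x} \<subseteq> I"
  shows "down_cl (topspace TX) leX K = down_cl (topspace TX) leX (K \<inter> I)"
proof -
  interpret dual: common_retraction TX "\<lambda>x y. leX y x" TY "\<lambda>x y. leY y x" f g k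
    using X Y f g k kf kg by unfold_locales (auto intro: comp_ord_dual comp_ord_hom_dual)
  show ?thesis
    using dual.up_cl_eq_up_cl_Int assms by (simp add: up_cl_dual)
qed

end

theorem lemma3p22:
  fixes TX :: "'x topology" and leX :: "'x \<Rightarrow> 'x \<Rightarrow> bool"
    and TY :: "'y topology" and leY :: "'y \<Rightarrow> 'y \<Rightarrow> bool"
    and TE :: "'e topology" and leE :: "'e \<Rightarrow> 'e \<Rightarrow> bool"
    and f g :: "'x \<Rightarrow> 'y" and k :: "'y \<Rightarrow> 'x" and h :: "'e \<Rightarrow> 'x"
    and K :: "'x set"
  assumes X: "comp_ord TX leX" and Y: "comp_ord TY leY"
    and f: "comp_ord_hom TX leX TY leY f" and g: "comp_ord_hom TX leX TY leY g"
    and k: "comp_ord_hom TY leY TX leX k"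
    and kf: "\<forall>x\<in>topspace TX. k (f x) = x" and kg: "\<forall>x\<in>topspace TX. k (g x) = x"
    and h: "comp_ord_equalizer TE leE TX leX TY leY f g h"
    and K: "closedin TX K"
  shows "(up_cl (topspace TY) leY (f ` K) = up_cl (topspace TY) leY (g ` K) \<longrightarrow>
            up_cl (topspace TX) leX K = up_cl (topspace TX) leX (K \<inter> h ` topspace TE))
       \<and> (down_cl (topspace TY) leY (f ` K) = down_cl (topspace TY) leY (g ` K) \<longrightarrow>
            down_cl (topspace TX) leX K = down_cl (topspace TX) leX (K \<inter> h ` topspace TE))
       \<and> (updown_cl (topspace TY) leY (f ` K) = updown_cl (topspace TY) leY (g ` K) \<longrightarrow>
            updown_cl (topspace TX) leX K = updown_cl (topspace TX) leX (K \<inter> h ` topspace TE))"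
proof -
  interpret common_retraction TX leX TY leY f g k
    using X Y f g k kf kg by unfold_locales
  have KT: "K \<subseteq> topspace TX"
    using K closedin_subset by auto
  have "{x} \<subseteq> h ` topspace TE" if "x \<in> K" "f x = g x" for x
    using that KT X by (intro comp_ord_equalizer_image[OF h X] closedin_Hausdorff_singleton)
      (auto simp: comp_ord_def)
  then have I: "{x \<in> K. f x = g x} \<subseteq> h ` topspace TE"
    by blast
  have fK: "f ` K \<subseteq> topspace TY" and gK: "g ` K \<subseteq> topspace TY"
    using KT comp_ord_hom_in_topspace[OF f] comp_ord_hom_in_topspace[OF g] by blast+
  note up = subset_up_cl[OF Y fK] subset_up_cl[OF Y gK]
    and down = subset_down_cl[OF Y fK] subset_down_cl[OF Y gK]
  show ?thesis
    using up_cl_eq_up_cl_Int[OF K _ _ I] down_cl_eq_down_cl_Int[OF K _ _ I] up down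
    unfolding updown_cl_def by blast
qed

end
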